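(* Let $d=4c_2-\alpha c_1$, $\ell=2c_2-\alpha c_1$, $x^*=\alpha/d$, $\hat x=\alpha/\ell$, $\delta^\sharp=\frac{d^2}{8c_2\ell+d^2}$. For every $\delta\in(0,1)$ there exists $\bar x\in(x^*,\hat x]$ such that the trigger strategy profile with cooperative level $\bar x$ is a subgame perfect equilibrium of $G^\infty(\delta)$; explicitly one may take $\bar x=\hat x$ if $\delta\ge\delta^\sharp$ and $\bar x=\frac{\alpha}{d}\cdot\frac{d^2-\delta\alpha^2c_1^2+32\delta c_2^2}{d^2-\delta\alpha^2c_1^2}$ if $\delta<\delta^\sharp$.
   Context: Fix real numbers $\alpha>0$, $c_1\in[0,\tfrac{2}{\alpha}]$ and $c_2\in[\tfrac32,2]$. The stage game $G$ (Partnership Game) has two players $i=1,2$; player $i$ chooses an effort level $x_i\in[0,\alpha]$, choices being simultaneous. Player $i$'s payoff is $$u_i(x_1,x_2)=\alpha\Big(\frac{x_1+x_2}{2}+c_1\frac{x_1x_2}{2}\Big)-c_2x_i^2 .$$ The Nash equilibrium effort of $G$ is $x^*=\frac{\alpha}{4c_2-\alpha c_1}$. For $\delta\in(0,1)$, $G^\infty(\delta)$ denotes the infinitely repeated game with perfect monitoring in which $G$ is played in periods $t=1,2,\dots$, each player observes all past action profiles, and player $i$'s payoff from a play $(a^t)_{t\ge1}$ is $\sum_{t\ge1}\delta^{t-1}u_i(a^t)$. For $\bar x\in[0,\alpha]$, the trigger strategy with cooperative level $\bar x$ is the strategy which, after history $h^t=(a^1,\dots,a^{t-1})$, plays $\bar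 x$ if $t=1$ or $a^s=(\bar x,\bar x)$ for all $s<t$, and plays $x^*$ otherwise. *)

theory Defs
  imports Complex_Main
begin

type_synonym profile = "real \<times> real"
type_synonym history = "profile list"
type_synonym strategy = "history \<Rightarrow> real"

definition u :: "real \<Rightarrow> real \<Rightarrow> real \<Rightarrow> nat \<Rightarrow> profile \<Rightarrow> real" where
  "u \<alpha> c1 c2 i a = \<alpha> * ((fst a + snd a) / 2 + c1 * (fst a * snd a) / 2)
      - c2 * (if i = 1 then fst a else snd a)^2"

definition is_strategy :: "real \<Rightarrow> strategy \<Rightarrow> bool" where
  "is_strategy \<alpha> s \<longleftrightarrow> (\<forall>h. s h \<in> {0..\<alpha>})"

definition is_history :: "real \<Rightarrow> history \<Rightarrow> bool" where
  "is_history \<alpha> h \<longleftrightarrow> (\<forall>a\<in>set h. fst a \<in> {0..\<alpha>} \<and> snd a \<in> {0..\<alpha>})"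

fun hist :: "strategy \<Rightarrow> strategy \<Rightarrow> history \<Rightarrow> nat \<Rightarrow> history" where
  "hist s1 s2 h 0 = h"
| "hist s1 s2 h (Suc n) = hist s1 s2 h n @ [(s1 (hist s1 s2 h n), s2 (hist s1 s2 h n))]"

definition play :: "strategy \<Rightarrow> strategy \<Rightarrow> history \<Rightarrow> nat \<Rightarrow> profile" where
  "play s1 s2 h n = (s1 (hist s1 s2 h n), s2 (hist s1 s2 h n))"

definition cont_payoff :: "real \<Rightarrow> real \<Rightarrow> real \<Rightarrow> real \<Rightarrow> nat \<Rightarrow> strategy \<Rightarrow> strategy \<Rightarrow> history \<Rightarrow> real" where
  "cont_payoff \<alpha> c1 c2 \<delta> i s1 s2 h = (\<Sum>n. \<delta>^n * u \<alpha> c1 c2 i (play s1 s2 h n))"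

definition is_SPE :: "real \<Rightarrow> real \<Rightarrow> real \<Rightarrow> real \<Rightarrow> strategy \<Rightarrow> strategy \<Rightarrow> bool" where
  "is_SPE \<alpha> c1 c2 \<delta> s1 s2 \<longleftrightarrow> is_strategy \<alpha> s1 \<and> is_strategy \<alpha> s2 \<and>
     (\<forall>h. is_history \<alpha> h \<longrightarrow>
        (\<forall>s'. is_strategy \<alpha> s' \<longrightarrow>
           cont_payoff \<alpha> c1 c2 \<delta> 1 s' s2 h \<le> cont_payoff \<alpha> c1 c2 \<delta> 1 s1 s2 h \<and>
           cont_payoff \<alpha> c1 c2 \<delta> 2 s1 s' h \<le> cont_payoff \<alpha> c1 c2 \<delta> 2 s1 s2 h))"

definition xstar :: "real \<Rightarrow> real \<Rightarrow> real \<Rightarrow> real" where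
  "xstar \<alpha> c1 c2 = \<alpha> / (4 * c2 - \<alpha> * c1)"

definition trigger :: "real \<Rightarrow> real \<Rightarrow> real \<Rightarrow> real \<Rightarrow> strategy" where
  "trigger \<alpha> c1 c2 xbar h = (if (\<forall>a\<in>set h. a = (xbar, xbar)) then xbar else xstar \<alpha> c1 c2)"

end

theory Submission
  imports Defs
begin

text \<open>
  Let v = u(x,x) and N = u(x*,x*). The trigger profile gives player 1 the value
  V(g) = v/(1-\<delta>) after cooperative histories and N/(1-\<delta>) otherwise, and V
  satisfies the Bellman inequality u(y, T g) \<le> V g - \<delta> V(g @ [(y, T g)]) for every
  action y, with equality for y = T g. Summing the discounted inequality along any
  play telescopes to "no strategy earns more than V h", which is what trigger earns.
  Off the cooperative path the inequality holds because x* is a best reply to itself;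
  on it, a deviation gains at most c2 (x - BR x)^2 today and loses \<delta>(v - N)/(1-\<delta>)
  in the future. Writing x = x* + t, that trade-off is the linear condition
  t (d^2 - \<delta> \<alpha>^2 c1^2) \<le> 32 \<delta> c2^2 x*; its largest solution is the stated
  formula, capped by the joint optimum \<alpha>/l, and the cap binds exactly when \<delta> \<ge> \<delta>#.
  Player 2 is player 1 of the game with coordinates swapped.
\<close>

definition best_response :: "real \<Rightarrow> real \<Rightarrow> real \<Rightarrow> real \<Rightarrow> real" where
  "best_response \<alpha> c1 c2 x = \<alpha> * (1 + c1 * x) / (4 * c2)"

lemma u_deviation_eq:
  fixes \<alpha> c1 c2 x y :: real
  assumes "c2 \<noteq> 0"
  defines "\<beta> \<equiv> best_response \<alpha> c1 c2 x"
  shows "u \<alpha> c1 c2 1 (y, x) = u \<alpha> c1 c2 1 (x, x) + c2 * (x - \<beta>)^2 - c2 * (y - \<beta>)^2"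
proof -
  have "4 * c2 * \<beta> = \<alpha> * (1 + c1 * x)"
    using assms by (simp add: best_response_def)
  moreover have "u \<alpha> c1 c2 1 (y, x) - (u \<alpha> c1 c2 1 (x, x) + c2 * (x - \<beta>)^2 - c2 * (y - \<beta>)^2)
      = (y - x) * (\<alpha> * (1 + c1 * x) - 4 * c2 * \<beta>) / 2"
    by (simp add: u_def power2_eq_square field_simps)
  ultimately show ?thesis
    by simp
qed

lemma u_deviation_le:
  assumes "c2 > 0"
  shows "u \<alpha> c1 c2 1 (y, x) \<le> u \<alpha> c1 c2 1 (x, x) + c2 * (x - best_response \<alpha> c1 c2 x)^2"
  using u_deviation_eq[of c2 \<alpha> c1 y x] assms by simp

lemma best_response_xstar:
  assumes "c2 \<noteq> 0" "4 * c2 - \<alpha> * c1 \<noteq> 0"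
  shows "best_response \<alpha> c1 c2 (xstar \<alpha> c1 c2) = xstar \<alpha> c1 c2"
proof -
  have "\<alpha> * (1 + c1 * xstar \<alpha> c1 c2) = 4 * c2 * xstar \<alpha> c1 c2"
    using assms(2) by (simp add: xstar_def field_simps)
  then show ?thesis
    using assms(1) by (simp add: best_response_def)
qed

lemma u_bounded:
  assumes "0 \<le> \<alpha>" "a \<in> {0..\<alpha>}" "b \<in> {0..\<alpha>}"
  shows "\<bar>u \<alpha> c1 c2 i (a, b)\<bar> \<le> \<alpha> * \<alpha> + \<bar>c1\<bar> * \<alpha>^3 / 2 + \<bar>c2\<bar> * \<alpha>^2"
proof -
  have ab: "0 \<le> a + b" "a + b \<le> 2 * \<alpha>" "\<bar>a * b\<bar> \<le> \<alpha>^2"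
    "\<bar>(if i = 1 then a else b)^2\<bar> \<le> \<alpha>^2"
    using assms by (auto simp: abs_mult power2_eq_square intro: mult_mono)
  have "\<bar>\<alpha> * ((a + b) / 2)\<bar> \<le> \<alpha> * \<alpha>"
    using mult_left_mono[OF ab(2) assms(1)] ab(1) assms(1) by simp
  moreover have "\<bar>\<alpha> * (c1 * (a * b) / 2)\<bar> \<le> \<bar>c1\<bar> * \<alpha>^3 / 2"
    using mult_left_mono[OF ab(3), of "\<alpha> * \<bar>c1\<bar>"] assms(1)
    by (simp add: abs_mult power3_eq_cube power2_eq_square mult_ac)
  moreover have "\<bar>c2 * (if i = 1 then a else b)^2\<bar> \<le> \<bar>c2\<bar> * \<alpha>^2"
    using mult_left_mono[OF ab(4), of "\<bar>c2\<bar>"] by (simp add: abs_mult)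
  moreover have "u \<alpha> c1 c2 i (a, b)
      = \<alpha> * ((a + b) / 2) + \<alpha> * (c1 * (a * b) / 2) - c2 * (if i = 1 then a else b)^2"
    by (simp add: u_def distrib_left)
  ultimately show ?thesis
    by linarith
qed

lemma u_player2_swap: "u \<alpha> c1 c2 2 a = u \<alpha> c1 c2 1 (prod.swap a)"
  by (cases a) (simp add: u_def algebra_simps)

definition swap_strategy :: "strategy \<Rightarrow> strategy" where
  "swap_strategy s h = s (map prod.swap h)"

lemma hist_swap:
  "hist s1 s2 h n = map prod.swap (hist (swap_strategy s2) (swap_strategy s1) (map prod.swap h) n)"
  by (induction n) (simp_all add: swap_strategy_def comp_def)

lemma cont_payoff_player2_swap:
  "cont_payoff \<alpha> c1 c2 \<delta> 2 s1 s2 h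
     = cont_payoff \<alpha> c1 c2 \<delta> 1 (swap_strategy s2) (swap_strategy s1) (map prod.swap h)"
  unfolding cont_payoff_def play_def u_player2_swap
  by (subst (1 2) hist_swap) (simp add: swap_strategy_def comp_def)

lemma is_strategy_swap: "is_strategy \<alpha> s \<Longrightarrow> is_strategy \<alpha> (swap_strategy s)"
  by (simp add: is_strategy_def swap_strategy_def)

lemma swap_strategy_trigger: "swap_strategy (trigger \<alpha> c1 c2 x) = trigger \<alpha> c1 c2 x"
  by (auto simp: fun_eq_iff swap_strategy_def trigger_def prod.swap_def)

lemma discounted_telescoping_sums:
  fixes V :: "nat \<Rightarrow> real"
  assumes "0 \<le> \<delta>" "\<delta> < 1" and V_bound: "\<And>n. \<bar>V n\<bar> \<le> B"
  shows "(\<lambda>n. \<delta>^n * (V n - \<delta> * V (Suc n))) sums V 0"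
proof -
  have "(\<lambda>n. \<delta>^n * V n) \<longlonglongrightarrow> 0"
  proof (rule tendsto_0_le[where K = 1])
    show "\<forall>\<^sub>F n in sequentially. norm (\<delta>^n * V n) \<le> norm (\<delta>^n * B) * 1"
    proof (intro always_eventually allI)
      fix n
      have "\<bar>V n\<bar> \<le> \<bar>B\<bar>"
        using V_bound order_trans abs_ge_self by blast
      then show "norm (\<delta>^n * V n) \<le> norm (\<delta>^n * B) * 1"
        using assms(1) by (simp add: abs_mult mult_left_mono)
    qed
    show "(\<lambda>n. \<delta>^n * B) \<longlonglongrightarrow> 0"
      using assms by (intro tendsto_mult_left_zero LIMSEQ_power_zero) auto
  qed
  from telescope_sums'[OF this] show ?thesis
    by (simp add: algebra_simps)
qed

lemma discounted_sum_le_telescoping: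
  fixes f V :: "nat \<Rightarrow> real"
  assumes "0 \<le> \<delta>" "\<delta> < 1" "\<And>n. \<bar>V n\<bar> \<le> B" "\<And>n. \<bar>f n\<bar> \<le> M"
    and step: "\<And>n. f n \<le> V n - \<delta> * V (Suc n)"
  shows "(\<Sum>n. \<delta>^n * f n) \<le> V 0"
proof -
  have tele: "(\<lambda>n. \<delta>^n * (V n - \<delta> * V (Suc n))) sums V 0"
    using discounted_telescoping_sums assms(1-3) .
  have "summable (\<lambda>n. \<delta>^n * f n)"
  proof (rule summable_comparison_test')
    show "summable (\<lambda>n. \<delta>^n * M)"
      using assms by (simp add: summable_mult2)
    show "norm (\<delta>^n * f n) \<le> \<delta>^n * M" for n
      using assms by (simp add: abs_mult mult_left_mono)
  qed
  moreover have "\<delta>^n * f n \<le> \<delta>^n * (V n - \<delta> * V (Suc n))" for n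
    using step assms(1) by (simp add: mult_left_mono)
  ultimately have "(\<Sum>n. \<delta>^n * f n) \<le> (\<Sum>n. \<delta>^n * (V n - \<delta> * V (Suc n)))"
    using sums_summable[OF tele] by (intro suminf_le) auto
  then show ?thesis
    using sums_unique[OF tele] by simp
qed

definition trigger_incentive :: "real \<Rightarrow> real \<Rightarrow> real \<Rightarrow> real \<Rightarrow> real \<Rightarrow> bool" where
  "trigger_incentive \<alpha> c1 c2 \<delta> x \<longleftrightarrow>
     (1 - \<delta>) * (c2 * (x - best_response \<alpha> c1 c2 x)^2)
       \<le> \<delta> * (u \<alpha> c1 c2 1 (x, x) - u \<alpha> c1 c2 1 (xstar \<alpha> c1 c2, xstar \<alpha> c1 c2))"

definition trigger_value :: "real \<Rightarrow> real \<Rightarrow> real \<Rightarrow> real \<Rightarrow> real \<Rightarrow> history \<Rightarrow> real" where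
  "trigger_value \<alpha> c1 c2 \<delta> x g =
     (if \<forall>a\<in>set g. a = (x, x) then u \<alpha> c1 c2 1 (x, x)
      else u \<alpha> c1 c2 1 (xstar \<alpha> c1 c2, xstar \<alpha> c1 c2)) / (1 - \<delta>)"

lemma is_strategy_trigger:
  "x \<in> {0..\<alpha>} \<Longrightarrow> xstar \<alpha> c1 c2 \<in> {0..\<alpha>} \<Longrightarrow> is_strategy \<alpha> (trigger \<alpha> c1 c2 x)"
  by (simp add: is_strategy_def trigger_def)

lemma trigger_value_bounded:
  assumes "\<delta> < 1"
  shows "\<bar>trigger_value \<alpha> c1 c2 \<delta> x g\<bar>
    \<le> (\<bar>u \<alpha> c1 c2 1 (x, x)\<bar> + \<bar>u \<alpha> c1 c2 1 (xstar \<alpha> c1 c2, xstar \<alpha> c1 c2)\<bar>) / (1 - \<delta>)"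
  using assms by (auto simp: trigger_value_def intro: divide_right_mono)

lemma stationary_value_eq:
  fixes \<delta> w :: real
  assumes "\<delta> \<noteq> 1"
  shows "w / (1 - \<delta>) - \<delta> * (w / (1 - \<delta>)) = w"
proof -
  have "w / (1 - \<delta>) - \<delta> * (w / (1 - \<delta>)) = (1 - \<delta>) * (w / (1 - \<delta>))"
    by (simp add: left_diff_distrib diff_divide_distrib)
  then show ?thesis
    using assms by simp
qed

lemma trigger_value_step_eq:
  fixes \<alpha> c1 c2 \<delta> x :: real
  assumes "\<delta> \<noteq> 1"
  defines "T \<equiv> trigger \<alpha> c1 c2 x" and "V \<equiv> trigger_value \<alpha> c1 c2 \<delta> x"
  shows "u \<alpha> c1 c2 1 (T g, T g) = V g - \<delta> * V (g @ [(T g, T g)])"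
  using stationary_value_eq[OF assms(1)] by (simp add: T_def V_def trigger_def trigger_value_def)

lemma trigger_value_step_le:
  fixes \<alpha> c1 c2 \<delta> x :: real
  assumes "c2 > 0" "4 * c2 - \<alpha> * c1 \<noteq> 0" "\<delta> < 1" "trigger_incentive \<alpha> c1 c2 \<delta> x"
  defines "T \<equiv> trigger \<alpha> c1 c2 x" and "V \<equiv> trigger_value \<alpha> c1 c2 \<delta> x"
  shows "u \<alpha> c1 c2 1 (y, T g) \<le> V g - \<delta> * V (g @ [(y, T g)])"
proof -
  define xs where "xs = xstar \<alpha> c1 c2"
  have discount: "w / (1 - \<delta>) - \<delta> * (w' / (1 - \<delta>)) = (w - \<delta> * w') / (1 - \<delta>)" for w w'
    by (simp add: diff_divide_distrib)
  consider (coop) "\<forall>a\<in>set g. a = (x, x)" "y = x" | (deviate) "\<forall>a\<in>set g. a = (x, x)" "y \<noteq> x"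
    | (punish) "\<not> (\<forall>a\<in>set g. a = (x, x))"
    by blast
  then show ?thesis
  proof cases
    case coop
    then have "y = T g"
      by (simp add: T_def trigger_def)
    then show ?thesis
      using trigger_value_step_eq[of \<delta> \<alpha> c1 c2 x g] assms(3) by (simp add: T_def V_def)
  next
    case deviate
    have "u \<alpha> c1 c2 1 (y, x) \<le> u \<alpha> c1 c2 1 (x, x) + c2 * (x - best_response \<alpha> c1 c2 x)^2"
      using u_deviation_le assms(1) .
    also have "\<dots> \<le> (u \<alpha> c1 c2 1 (x, x) - \<delta> * u \<alpha> c1 c2 1 (xs, xs)) / (1 - \<delta>)"
      using assms(3,4) by (simp add: trigger_incentive_def xs_def pos_le_divide_eq algebra_simps)
    finally show ?thesis
      using deviate discount by (simp add: T_def V_def trigger_def trigger_value_def xs_def)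
  next
    case punish
    have "u \<alpha> c1 c2 1 (y, xs) \<le> u \<alpha> c1 c2 1 (xs, xs)"
      using u_deviation_le[of c2 \<alpha> c1 y xs] best_response_xstar[of c2 \<alpha> c1] assms(1,2)
      by (simp add: xs_def)
    moreover have "T g = xs" "V g = u \<alpha> c1 c2 1 (xs, xs) / (1 - \<delta>)"
      "V (g @ [(y, T g)]) = u \<alpha> c1 c2 1 (xs, xs) / (1 - \<delta>)"
      using punish by (auto simp: T_def V_def trigger_def trigger_value_def xs_def)
    ultimately show ?thesis
      using stationary_value_eq[of \<delta> "u \<alpha> c1 c2 1 (xs, xs)"] assms(3) by simp
  qed
qed

lemma trigger_best_reply:
  fixes \<alpha> c1 c2 \<delta> x :: real
  assumes "c2 > 0" "4 * c2 - \<alpha> * c1 \<noteq> 0" "0 \<le> \<delta>" "\<delta> < 1"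
    and x: "x \<in> {0..\<alpha>}" and xs: "xstar \<alpha> c1 c2 \<in> {0..\<alpha>}"
    and incentive: "trigger_incentive \<alpha> c1 c2 \<delta> x" and s: "is_strategy \<alpha> s"
  defines "T \<equiv> trigger \<alpha> c1 c2 x"
  shows "cont_payoff \<alpha> c1 c2 \<delta> 1 s T h \<le> cont_payoff \<alpha> c1 c2 \<delta> 1 T T h"
proof -
  define V where "V = trigger_value \<alpha> c1 c2 \<delta> x"
  define B where "B = (\<bar>u \<alpha> c1 c2 1 (x, x)\<bar>
    + \<bar>u \<alpha> c1 c2 1 (xstar \<alpha> c1 c2, xstar \<alpha> c1 c2)\<bar>) / (1 - \<delta>)"
  have V_bound: "\<bar>V g\<bar> \<le> B" for g
    unfolding V_def B_def using trigger_value_bounded assms(4) .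
  have T: "is_strategy \<alpha> T"
    unfolding T_def using is_strategy_trigger x xs .
  have hist_Suc: "hist s' T h (Suc n) = hist s' T h n @ [play s' T h n]" for s' n
    by (simp add: play_def)
  have "(\<lambda>n. \<delta>^n * (V (hist T T h n) - \<delta> * V (hist T T h (Suc n)))) sums V (hist T T h 0)"
    by (rule discounted_telescoping_sums[OF assms(3,4) V_bound])
  moreover have "u \<alpha> c1 c2 1 (play T T h n) = V (hist T T h n) - \<delta> * V (hist T T h (Suc n))" for n
    unfolding hist_Suc V_def T_def play_def using trigger_value_step_eq assms(4) by simp
  ultimately have value_T: "cont_payoff \<alpha> c1 c2 \<delta> 1 T T h = V h"
    unfolding cont_payoff_def by (simp add: sums_iff)
  have "\<bar>u \<alpha> c1 c2 1 (play s T h n)\<bar> \<le> \<alpha> * \<alpha> + \<bar>c1\<bar> * \<alpha>^3 / 2 + \<bar>c2\<bar> * \<alpha>^2" for n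
    using u_bounded[of \<alpha>] s T x unfolding play_def is_strategy_def by simp
  moreover have "u \<alpha> c1 c2 1 (play s T h n) \<le> V (hist s T h n) - \<delta> * V (hist s T h (Suc n))" for n
    unfolding hist_Suc V_def T_def play_def using trigger_value_step_le assms(1,2,4) incentive by simp
  ultimately have "cont_payoff \<alpha> c1 c2 \<delta> 1 s T h \<le> V (hist s T h 0)"
    unfolding cont_payoff_def by (rule discounted_sum_le_telescoping[OF assms(3,4) V_bound])
  then show ?thesis
    using value_T by simp
qed

lemma trigger_is_SPE:
  fixes \<alpha> c1 c2 \<delta> x :: real
  assumes "c2 > 0" "4 * c2 - \<alpha> * c1 \<noteq> 0" "0 \<le> \<delta>" "\<delta> < 1"
    and "x \<in> {0..\<alpha>}" "xstar \<alpha> c1 c2 \<in> {0..\<alpha>}" "trigger_incentive \<alpha> c1 c2 \<delta> x"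
  shows "is_SPE \<alpha> c1 c2 \<delta> (trigger \<alpha> c1 c2 x) (trigger \<alpha> c1 c2 x)"
  unfolding is_SPE_def cont_payoff_player2_swap swap_strategy_trigger
  using trigger_best_reply[OF assms] is_strategy_trigger[OF assms(5,6)] is_strategy_swap
  by blast

lemma trigger_incentive_if_gain_le:
  fixes \<alpha> c1 c2 \<delta> x :: real
  assumes "c2 > 0" "4 * c2 - \<alpha> * c1 \<noteq> 0" "0 \<le> \<delta>" "xstar \<alpha> c1 c2 \<le> x"
    and gain: "(x - xstar \<alpha> c1 c2) * ((4 * c2 - \<alpha> * c1)^2 - \<delta> * \<alpha>^2 * c1^2)
      \<le> 32 * \<delta> * c2^2 * xstar \<alpha> c1 c2"
  shows "trigger_incentive \<alpha> c1 c2 \<delta> x"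
proof -
  define d where "d = 4 * c2 - \<alpha> * c1"
  define l where "l = 2 * c2 - \<alpha> * c1"
  define xs where "xs = xstar \<alpha> c1 c2"
  define t where "t = x - xs"
  have xs_d: "xs * d = \<alpha>"
    using assms(2) by (simp add: xs_def d_def xstar_def)
  have t: "t \<ge> 0" "x = xs + t"
    using assms(4) by (simp_all add: t_def xs_def)
  have "d^2 - \<delta> * \<alpha>^2 * c1^2 = (1 - \<delta>) * d^2 + 8 * \<delta> * c2 * l"
    by (simp add: d_def l_def power2_eq_square algebra_simps)
  then have "t * (t * ((1 - \<delta>) * d^2 + 8 * \<delta> * c2 * l)) \<le> t * (32 * \<delta> * c2^2 * xs)"
    using gain t(1) by (intro mult_left_mono) (simp_all add: d_def xs_def t_def)
  then have "t * (t * ((1 - \<delta>) * d^2)) / (16 * c2)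
      \<le> (t * (32 * \<delta> * c2^2 * xs) - t * (t * (8 * \<delta> * c2 * l))) / (16 * c2)"
    using assms(1) by (intro divide_right_mono) (simp_all add: algebra_simps)
  moreover have "(1 - \<delta>) * (c2 * (d * t / (4 * c2))^2) = t * (t * ((1 - \<delta>) * d^2)) / (16 * c2)"
    using assms(1) by (simp add: field_simps power2_eq_square)
  moreover have "\<delta> * (t * (2 * c2 * xs - l * t / 2))
      = (t * (32 * \<delta> * c2^2 * xs) - t * (t * (8 * \<delta> * c2 * l))) / (16 * c2)"
    using assms(1) by (simp add: field_simps power2_eq_square)
  moreover have "x - best_response \<alpha> c1 c2 x = d * t / (4 * c2)"
    using assms(1) xs_d unfolding t(2) by (simp add: best_response_def d_def field_simps)
  moreover have "u \<alpha> c1 c2 1 (x, x) - u \<alpha> c1 c2 1 (xs, xs) = t * (2 * c2 * xs - l * t / 2)"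
  proof -
    have "u \<alpha> c1 c2 1 (x, x) - u \<alpha> c1 c2 1 (xs, xs) = t * (\<alpha> + \<alpha> * c1 * xs - 2 * c2 * xs - l * t / 2)"
      unfolding t(2) by (simp add: u_def l_def power2_eq_square field_simps)
    also have "\<alpha> + \<alpha> * c1 * xs - 2 * c2 * xs = 2 * c2 * xs"
      using xs_d by (simp add: d_def algebra_simps)
    finally show ?thesis .
  qed
  ultimately show ?thesis
    unfolding trigger_incentive_def xs_def[symmetric] by simp
qed

lemma cooperative_level_bounds:
  fixes \<alpha> c1 c2 \<delta> d l xb :: real
  assumes "\<alpha> > 0" "c2 > 0" "l > 0" "0 < \<delta>" "\<delta> < 1"
    and d: "d = 4 * c2 - \<alpha> * c1" and l: "l = 2 * c2 - \<alpha> * c1"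
    and xb: "xb = (if \<delta> \<ge> d^2 / (8 * c2 * l + d^2) then \<alpha> / l
       else (\<alpha> / d) * ((d^2 - \<delta> * \<alpha>^2 * c1^2 + 32 * \<delta> * c2^2) / (d^2 - \<delta> * \<alpha>^2 * c1^2)))"
  shows "xb \<in> {\<alpha> / d<..\<alpha> / l}"
    and "(xb - \<alpha> / d) * (d^2 - \<delta> * \<alpha>^2 * c1^2) \<le> 32 * \<delta> * c2^2 * (\<alpha> / d)"
proof -
  define xs where "xs = \<alpha> / d"
  define E where "E = d^2 - \<delta> * \<alpha>^2 * c1^2"
  have d_l: "d = l + 2 * c2"
    using d l by simp
  have E: "E = (1 - \<delta>) * d^2 + 8 * \<delta> * c2 * l"
    unfolding E_def d l by (simp add: power2_eq_square algebra_simps)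
  have "E > 0"
    unfolding E using assms(2-5) by (simp add: add_nonneg_pos)
  have "d > 0"
    using assms(2,3) d_l by simp
  have "xs > 0"
    unfolding xs_def using assms(1) \<open>d > 0\<close> by simp
  have xh: "\<alpha> / l = xs + 2 * c2 * xs / l"
  proof -
    have "xs + 2 * c2 * xs / l = xs * d / l"
      using assms(3) d_l by (simp add: field_simps)
    then show ?thesis
      using \<open>d > 0\<close> by (simp add: xs_def)
  qed
  have gap: "2 * c2 * xs / l > 0"
    using assms(2,3) \<open>xs > 0\<close> by simp
  have "8 * c2 * l + d^2 > 0"
    using assms(2,3) by (simp add: add_pos_nonneg)
  then have threshold: "\<delta> \<ge> d^2 / (8 * c2 * l + d^2) \<longleftrightarrow> E \<le> 16 * \<delta> * c2 * l"
    unfolding E by (simp add: divide_le_eq algebra_simps)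
  have "xb \<in> {xs<..\<alpha> / l} \<and> (xb - xs) * E \<le> 32 * \<delta> * c2^2 * xs"
  proof (cases "\<delta> \<ge> d^2 / (8 * c2 * l + d^2)")
    case True
    have "(2 * c2 * xs / l) * E \<le> (2 * c2 * xs / l) * (16 * \<delta> * c2 * l)"
      using True threshold gap by (intro mult_left_mono) auto
    also have "\<dots> = 32 * \<delta> * c2^2 * xs"
      using assms(3) by (simp add: power2_eq_square)
    finally show ?thesis
      using True gap xb xh by auto
  next
    case False
    define t where "t = 32 * \<delta> * c2^2 * xs / E"
    have "xb = xs * ((E + 32 * \<delta> * c2^2) / E)"
      using False unfolding xb xs_def E_def by simp
    also have "\<dots> = xs + t"
      unfolding t_def using \<open>E > 0\<close> by (simp add: field_simps)
    finally have xb_t: "xb = xs + t" .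
    have "t > 0"
      unfolding t_def using assms(4) \<open>xs > 0\<close> \<open>E > 0\<close> assms(2) by simp
    have "2 * c2 * xs * (16 * \<delta> * c2 * l) \<le> 2 * c2 * xs * E"
      using False threshold assms(2) \<open>xs > 0\<close> by (intro mult_left_mono) auto
    then have "t \<le> 2 * c2 * xs / l"
      unfolding t_def using \<open>E > 0\<close> assms(3) by (simp add: field_simps power2_eq_square)
    then show ?thesis
      using xb_t \<open>t > 0\<close> \<open>E > 0\<close> xh unfolding t_def by auto
  qed
  then show "xb \<in> {\<alpha> / d<..\<alpha> / l}"
    and "(xb - \<alpha> / d) * (d^2 - \<delta> * \<alpha>^2 * c1^2) \<le> 32 * \<delta> * c2^2 * (\<alpha> / d)"
    unfolding xs_def E_def by auto
qed

theorem corollary2: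
  fixes \<alpha> c1 c2 \<delta> :: real
  assumes "\<alpha> > 0" and "0 \<le> c1" and "c1 \<le> 2 / \<alpha>" and "3/2 \<le> c2" and "c2 \<le> 2"
    and "0 < \<delta>" and "\<delta> < 1"
  shows "let d = 4 * c2 - \<alpha> * c1; l = 2 * c2 - \<alpha> * c1;
             xs = \<alpha> / d; xh = \<alpha> / l;
             \<delta>s = d^2 / (8 * c2 * l + d^2);
             xb = (if \<delta> \<ge> \<delta>s then xh
                   else (\<alpha> / d) * ((d^2 - \<delta> * \<alpha>^2 * c1^2 + 32 * \<delta> * c2^2)
                                    / (d^2 - \<delta> * \<alpha>^2 * c1^2)))
         in (\<exists>x \<in> {xs<..xh}. is_SPE \<alpha> c1 c2 \<delta> (trigger \<alpha> c1 c2 x) (trigger \<alpha> c1 c2 x))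
            \<and> xb \<in> {xs<..xh}
            \<and> is_SPE \<alpha> c1 c2 \<delta> (trigger \<alpha> c1 c2 xb) (trigger \<alpha> c1 c2 xb)"
proof -
  define d where "d = 4 * c2 - \<alpha> * c1"
  define l where "l = 2 * c2 - \<alpha> * c1"
  define xb where "xb = (if \<delta> \<ge> d^2 / (8 * c2 * l + d^2) then \<alpha> / l
    else (\<alpha> / d) * ((d^2 - \<delta> * \<alpha>^2 * c1^2 + 32 * \<delta> * c2^2) / (d^2 - \<delta> * \<alpha>^2 * c1^2)))"
  have "\<alpha> * c1 \<le> 2"
    using assms(1,3) by (simp add: le_divide_eq mult.commute)
  then have "l \<ge> 1" "d \<ge> 1"
    using assms(4) by (simp_all add: l_def d_def)
  have xb: "xb \<in> {\<alpha> / d<..\<alpha> / l}"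
    and gain: "(xb - \<alpha> / d) * (d^2 - \<delta> * \<alpha>^2 * c1^2) \<le> 32 * \<delta> * c2^2 * (\<alpha> / d)"
    using cooperative_level_bounds[OF assms(1) _ _ assms(6,7) d_def l_def xb_def] assms(4) \<open>l \<ge> 1\<close>
    by simp_all
  have xstar: "xstar \<alpha> c1 c2 = \<alpha> / d"
    by (simp add: xstar_def d_def)
  have "0 < \<alpha> / d" "\<alpha> / d \<le> \<alpha>" "\<alpha> / l \<le> \<alpha>"
    using assms(1) \<open>d \<ge> 1\<close> \<open>l \<ge> 1\<close> by (simp_all add: divide_le_eq)
  then have "xb \<in> {0..\<alpha>}" "xstar \<alpha> c1 c2 \<in> {0..\<alpha>}"
    using xb xstar by auto
  moreover have "trigger_incentive \<alpha> c1 c2 \<delta> xb"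
    using trigger_incentive_if_gain_le[of c2 \<alpha> c1 \<delta> xb] gain xb xstar assms(4,6) \<open>d \<ge> 1\<close>
    by (simp add: d_def)
  ultimately have "is_SPE \<alpha> c1 c2 \<delta> (trigger \<alpha> c1 c2 xb) (trigger \<alpha> c1 c2 xb)"
    using trigger_is_SPE[of c2 \<alpha> c1 \<delta> xb] assms(4,6,7) \<open>d \<ge> 1\<close> by (simp add: d_def)
  with xb show ?thesis
    unfolding Let_def d_def[symmetric] l_def[symmetric] xb_def[symmetric] by blast
qed

end
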